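(* Let $\alpha\in(0,1)$ and let $A,B$ be finite-dimensional quantum systems. For a quantum channel $\Phi(\rho)=\sum_iK_i\rho K_i^\dagger$ ($\sum_iK_i^\dagger K_i=\mathrm{I}$) and a state $\rho$ set $T_\alpha(\rho,\Phi)=1-\mathrm{tr}\,\rho^\alpha\Phi(\rho^{1-\alpha})$, and for a bipartite state $\rho_{AB}$ with $\rho_A=\mathrm{tr}_B\rho_{AB}$ and a channel $\Phi_A$ on $A$ define $$D^T_\alpha(\rho_{AB}|\Phi_A)=T_\alpha(\rho_{AB},\Phi_A\otimes\mathcal{I}_B)-T_\alpha(\rho_A,\Phi_A),$$ where $\mathcal{I}_B$ is the identity channel on $B$. Then: (i) $D^T_\alpha(\rho_{AB}|\Phi_A)\ge0$, with equality when $\rho_{AB}=\rho_A\otimes\rho_B$ is a product state. (ii) For any unitaries $U_A$ on $A$ and $U_B$ on $B$, $D^T_\alpha\big((U_A\otimes U_B)\rho_{AB}(U_A\otimes U_B)^\dagger\,\big|\,\Phi_A\big)=D^T_\alpha(\rho_{AB}|\mathcal{U}_A^\dagger\Phi_A\mathcal{U}_A)$, where $\mathcal{U}_A^\dagger\Phi_A\mathcal{U}_A(\rho_A)=\sum_i(U_A^\dagger K_iU_A)\rho_A(U_A^\dagger K_iU_A)^\dagger$ for $\Phi_A(\rho)=\sum_iK_i\rho K_i^\dagger$. (iii) For any channel $\Phi_B$ on $B$, $D^T_\alpha\big((\mathcal{I}_A\otimes\Phi_B)(\rho_{AB})\,\big|\,\Phi_A\big)\le D^T_\alpha(\rho_{AB}|\Phi_A)$,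 where $\mathcal{I}_A$ is the identity channel on $A$.
   Context: $\rho^\alpha$ denotes the functional-calculus power of the positive operator $\rho$. The channel $\Phi_A\otimes\mathcal{I}_B$ has Kraus operators $K_i\otimes\mathrm{I}_B$. *)

theory Defs
  imports "HOL-Analysis.Analysis" "HOL-Library.Complex_Order"
begin

text \<open>Finite-dimensional quantum systems: operators on the system with (finite) basis index
  type 'n are complex matrices of type complex^'n^'n.  The composite system AB is indexed by
  'a \<times> 'b.\<close>

type_synonym 'n cmat = "complex^'n^'n"

definition adj :: "'n::finite cmat \<Rightarrow> 'n cmat" where
  "adj M = (\<chi> i j. cnj (M $ j $ i))"

definition hermitian :: "'n::finite cmat \<Rightarrow> bool" where
  "hermitian M \<longleftrightarrow> adj M = M"

definition psd :: "'n::finite cmat \<Rightarrow> bool" where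
  "psd M \<longleftrightarrow> hermitian M \<and> (\<forall>x::complex^'n. 0 \<le> (\<Sum>i\<in>UNIV. cnj (x $ i) * (M *v x) $ i))"

definition density :: "'n::finite cmat \<Rightarrow> bool" where
  "density \<rho> \<longleftrightarrow> psd \<rho> \<and> trace \<rho> = 1"

definition unitary :: "'n::finite cmat \<Rightarrow> bool" where
  "unitary U \<longleftrightarrow> adj U ** U = mat 1 \<and> U ** adj U = mat 1"

definition diag_mat :: "('n::finite \<Rightarrow> complex) \<Rightarrow> 'n cmat" where
  "diag_mat d = (\<chi> i j. if i = j then d i else 0)"

text \<open>Functional-calculus power of a positive operator, via its spectral decomposition
  (independent of the chosen decomposition).\<close>
definition mpow :: "'n::finite cmat \<Rightarrow> real \<Rightarrow> 'n cmat" where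
  "mpow \<rho> a = (SOME X. \<exists>U d. unitary U \<and> (\<forall>i. 0 \<le> d i) \<and>
       \<rho> = U ** diag_mat (\<lambda>i. complex_of_real (d i)) ** adj U \<and>
       X = U ** diag_mat (\<lambda>i. complex_of_real (d i powr a)) ** adj U)"

definition is_channel :: "'n::finite cmat list \<Rightarrow> bool" where
  "is_channel Ks \<longleftrightarrow> (\<Sum>K\<leftarrow>Ks. adj K ** K) = mat 1"

definition apply_ch :: "'n::finite cmat list \<Rightarrow> 'n cmat \<Rightarrow> 'n cmat" where
  "apply_ch Ks \<rho> = (\<Sum>K\<leftarrow>Ks. K ** \<rho> ** adj K)"

definition kron :: "'a::finite cmat \<Rightarrow> 'b::finite cmat \<Rightarrow> ('a \<times> 'b) cmat" where
  "kron A B = (\<chi> p q. A $ fst p $ fst q * B $ snd p $ snd q)"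

definition ptrace_B :: "('a::finite \<times> 'b::finite) cmat \<Rightarrow> 'a cmat" where
  "ptrace_B \<rho> = (\<chi> i k. \<Sum>j\<in>UNIV. \<rho> $ (i, j) $ (k, j))"

definition T_alpha :: "real \<Rightarrow> 'n::finite cmat \<Rightarrow> 'n cmat list \<Rightarrow> complex" where
  "T_alpha a \<rho> Ks = 1 - trace (mpow \<rho> a ** apply_ch Ks (mpow \<rho> (1 - a)))"

definition ext_A :: "'a::finite cmat list \<Rightarrow> ('a \<times> 'b::finite) cmat list" where
  "ext_A Ks = map (\<lambda>K. kron K (mat 1)) Ks"

definition ext_B :: "'b::finite cmat list \<Rightarrow> ('a::finite \<times> 'b) cmat list" where
  "ext_B Ls = map (\<lambda>L. kron (mat 1) L) Ls"

definition DT :: "real \<Rightarrow> ('a::finite \<times> 'b::finite) cmat \<Rightarrow> 'a cmat list \<Rightarrow> complex" where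
  "DT a \<rho> Ks = T_alpha a \<rho> (ext_A Ks) - T_alpha a (ptrace_B \<rho>) Ks"

end

theory Submission
  imports Defs
begin

text \<open>
  Write \<open>T_alpha a \<rho> \<Phi> = 1 - (\<Sum>K. tr (\<rho>\<^sup>a K \<rho>\<^sup>1\<^sup>-\<^sup>a K\<^sup>*))\<close>; each summand is a
  Wigner--Yanase--Dyson term.  In an eigenbasis of \<open>\<rho>\<close> (eigenvalues \<open>d\<close>) it equals
  \<open>\<Sum>\<^sub>j\<^sub>k |K\<^sub>j\<^sub>k|\<^sup>2 d\<^sub>j\<^sup>a d\<^sub>k\<^sup>1\<^sup>-\<^sup>a\<close>, and \<open>p\<^sup>a q\<^sup>1\<^sup>-\<^sup>a\<close> is a fixed positive multiple of
  \<open>\<integral>\<^sub>0\<^sup>\<infinity> s\<^sup>a\<^sup>-\<^sup>1 p q / (s q + p) ds\<close>.  For each \<open>s\<close> the kernel sum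
  \<open>\<Sum>\<^sub>j\<^sub>k |K\<^sub>j\<^sub>k|\<^sup>2 d\<^sub>j d\<^sub>k / (s d\<^sub>k + d\<^sub>j)\<close> is the minimum, over all splittings \<open>K = X + Y\<close>,
  of the cost \<open>tr (\<rho> X\<^sup>* X) + tr (\<rho> Y Y\<^sup>*) / s\<close>.  Hence the term for \<open>(\<rho>\<^sub>1, K\<^sub>1)\<close> is at most
  the one for \<open>(\<rho>\<^sub>2, K\<^sub>2)\<close> as soon as every splitting of \<open>K\<^sub>2\<close> can be carried to a splitting of
  \<open>K\<^sub>1\<close> of no larger cost.  For (i) the carrying map is \<open>X \<mapsto> X \<otimes> I\<close>, whose cost
  only sees \<open>\<rho>\<^sub>A\<close>; for (iii) it is the dual of \<open>I\<^sub>A \<otimes> \<Phi>\<^sub>B\<close>, which fixes \<open>K \<otimes> I\<close> and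
  does not increase the cost by the Kadison--Schwarz inequality.  Part (ii) and the product
  case are direct computations with the functional calculus.
\<close>

section \<open>Integral representation of weighted geometric means\<close>

text \<open>The parallel sum of \<open>q\<close> and \<open>p / s\<close>.\<close>
definition parallel_kernel :: "real \<Rightarrow> real \<Rightarrow> real \<Rightarrow> real" where
  "parallel_kernel s p q = p * q / (s * q + p)"

text \<open>This is \<open>\<pi> / sin (\<pi> a)\<close>; only its finiteness and positivity are needed.\<close>
definition kernel_const :: "real \<Rightarrow> ennreal" where
  "kernel_const a = (\<integral>\<^sup>+u. ennreal (indicator {0<..} u * (u powr (a - 1) / (1 + u))) \<partial>lborel)"

lemma borel_measurable_parallel_kernel[measurable]:
  "(\<lambda>s::real. ennreal (indicator {0<..} s * (s powr (a - 1) * parallel_kernel s p q)))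
     \<in> borel_measurable borel"
  unfolding parallel_kernel_def by measurable

lemma parallel_kernel_nonneg: "s > 0 \<Longrightarrow> p \<ge> 0 \<Longrightarrow> q \<ge> 0 \<Longrightarrow> parallel_kernel s p q \<ge> 0"
  unfolding parallel_kernel_def by simp

lemma parallel_kernel_rescale:
  assumes p: "p > 0" and q: "q > 0" and x: "x > 0"
  shows "(p / q) * ((p / q * x) powr (a - 1) * parallel_kernel (p / q * x) p q)
       = p powr a * q powr (1 - a) * (x powr (a - 1) / (1 + x))"
proof -
  have "p / q * x * q + p = p * (1 + x)"
    using q by (simp add: field_simps)
  then have kernel: "parallel_kernel (p / q * x) p q = q / (1 + x)"
    using p unfolding parallel_kernel_def by simp
  have "(p / q) * (p / q * x) powr (a - 1) = (p / q) * (p / q) powr (a - 1) * x powr (a - 1)"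
    by (simp only: powr_mult mult.assoc)
  also have "(p / q) * (p / q) powr (a - 1) = (p / q) powr a"
    using p q powr_add[of "p / q" "a - 1" 1] by simp
  finally have "(p / q) * ((p / q * x) powr (a - 1) * parallel_kernel (p / q * x) p q)
      = (p / q) powr a * q * (x powr (a - 1) / (1 + x))"
    unfolding kernel by (simp add: mult_ac)
  also have "(p / q) powr a * q = p powr a * q powr (1 - a)"
    using p q by (simp add: powr_divide powr_diff)
  finally show ?thesis .
qed

lemma nn_integral_parallel_kernel:
  assumes p: "p \<ge> 0" and q: "q \<ge> 0" and a: "0 < a" "a < 1"
  shows "(\<integral>\<^sup>+s. ennreal (indicator {0<..} s * (s powr (a - 1) * parallel_kernel s p q)) \<partial>lborel)
       = ennreal (p powr a * q powr (1 - a)) * kernel_const a"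
proof (cases "p = 0 \<or> q = 0")
  case True
  then show ?thesis using a by (auto simp: parallel_kernel_def)
next
  case False
  then have p': "p > 0" and q': "q > 0" using p q by auto
  define c where "c = p / q"
  have c: "c > 0" using p' q' unfolding c_def by auto
  have "(\<integral>\<^sup>+s. ennreal (indicator {0<..} s * (s powr (a - 1) * parallel_kernel s p q)) \<partial>lborel)
     = ennreal \<bar>c\<bar> * (\<integral>\<^sup>+x. ennreal (indicator {0<..} (0 + c * x)
         * ((0 + c * x) powr (a - 1) * parallel_kernel (0 + c * x) p q)) \<partial>lborel)"
    using c by (intro nn_integral_real_affine) auto
  also have "\<dots> = (\<integral>\<^sup>+x. ennreal \<bar>c\<bar> * ennreal (indicator {0<..} (c * x)
         * ((c * x) powr (a - 1) * parallel_kernel (c * x) p q)) \<partial>lborel)"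
    by (subst nn_integral_cmult) (auto simp: parallel_kernel_def)
  also have "\<dots> = (\<integral>\<^sup>+x. ennreal (p powr a * q powr (1 - a))
         * ennreal (indicator {0<..} x * (x powr (a - 1) / (1 + x))) \<partial>lborel)"
  proof (rule nn_integral_cong)
    fix x :: real
    show "ennreal \<bar>c\<bar> * ennreal (indicator {0<..} (c * x) * ((c * x) powr (a - 1) * parallel_kernel (c * x) p q))
        = ennreal (p powr a * q powr (1 - a)) * ennreal (indicator {0<..} x * (x powr (a - 1) / (1 + x)))"
      using c parallel_kernel_rescale[OF p' q', of x a, folded c_def]
      by (cases "x > 0") (auto simp: ennreal_mult'[symmetric] zero_less_mult_iff)
  qed
  also have "\<dots> = ennreal (p powr a * q powr (1 - a)) * kernel_const a"
    unfolding kernel_const_def by (rule nn_integral_cmult) measurable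
  finally show ?thesis .
qed

lemma kernel_const_finite:
  assumes a: "0 < a" "a < 1"
  shows "kernel_const a < \<infinity>"
proof -
  have "((\<lambda>x. x powr (a - 1)) has_integral (1 powr (a - 1 + 1) / (a - 1 + 1))) {0..1::real}"
    by (rule has_integral_powr_from_0) (use a in auto)
  then have small: "(\<integral>\<^sup>+x. ennreal (x powr (a - 1)) * indicator {0..1::real} x \<partial>lborel) < \<infinity>"
    by (subst nn_integral_has_integral_lebesgue') auto
  have "((\<lambda>x. x powr (a - 2)) has_integral (-(1 powr (a - 2 + 1)) / (a - 2 + 1))) {1::real..}"
    by (rule has_integral_powr_to_inf) (use a in auto)
  then have large: "(\<integral>\<^sup>+x. ennreal (x powr (a - 2)) * indicator {1::real..} x \<partial>lborel) < \<infinity>"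
    by (subst nn_integral_has_integral_lebesgue') auto
  have "kernel_const a \<le> (\<integral>\<^sup>+x. ennreal (x powr (a - 1)) * indicator {0..1::real} x
      + ennreal (x powr (a - 2)) * indicator {1::real..} x \<partial>lborel)"
    unfolding kernel_const_def
  proof (rule nn_integral_mono)
    fix x :: real
    show "ennreal (indicator {0<..} x * (x powr (a - 1) / (1 + x)))
       \<le> ennreal (x powr (a - 1)) * indicator {0..1} x + ennreal (x powr (a - 2)) * indicator {1..} x"
    proof (cases "x > 0")
      case True
      have "x powr (a - 1) / (1 + x) \<le> x powr (a - 1)"
        using True by (simp add: divide_le_eq)
      moreover have "x powr (a - 1) / (1 + x) \<le> x powr (a - 2)"
        using True powr_diff[of x "a - 1" 1] by (simp add: frac_le)
      ultimately show ?thesis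
        using True by (cases "x \<le> 1") (auto simp: indicator_def add_increasing2)
    qed simp
  qed
  also have "\<dots> = (\<integral>\<^sup>+x. ennreal (x powr (a - 1)) * indicator {0..1::real} x \<partial>lborel)
      + (\<integral>\<^sup>+x. ennreal (x powr (a - 2)) * indicator {1::real..} x \<partial>lborel)"
    by (rule nn_integral_add) auto
  also have "\<dots> < \<infinity>"
    using small large by simp
  finally show ?thesis .
qed

lemma kernel_const_pos:
  assumes a: "0 < a" "a < 1"
  shows "kernel_const a > 0"
proof -
  have "ennreal (1 / 6) = (\<integral>\<^sup>+x. ennreal (1 / 6) * indicator {1..2::real} x \<partial>lborel)"
    by (subst nn_integral_cmult_indicator) auto
  also have "\<dots> \<le> kernel_const a"
    unfolding kernel_const_def
  proof (rule nn_integral_mono)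
    fix x :: real
    show "ennreal (1 / 6) * indicator {1..2} x \<le> ennreal (indicator {0<..} x * (x powr (a - 1) / (1 + x)))"
    proof (cases "x \<in> {1..2}")
      case True
      then have x: "1 \<le> x" "x \<le> 2" by auto
      have "1 / 2 \<le> x powr (-1)"
        using x by (simp add: powr_minus field_simps)
      also have "\<dots> \<le> x powr (a - 1)"
        using x a by (intro powr_mono) auto
      finally have "(1 / 2) / 3 \<le> x powr (a - 1) / (1 + x)"
        using x by (intro frac_le) auto
      then show ?thesis using x by (simp add: indicator_def)
    qed simp
  qed
  finally show ?thesis
    by (metis ennreal_less_zero_iff divide_pos_pos zero_less_numeral zero_less_one order_less_le_trans)
qed

lemma nn_integral_sum_parallel_kernel:
  assumes "finite I" and a: "0 < a" "a < 1"
    and nonneg: "\<And>i. i \<in> I \<Longrightarrow> w i \<ge> 0 \<and> p i \<ge> 0 \<and> q i \<ge> 0"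
  shows "(\<integral>\<^sup>+s. ennreal (indicator {0<..} s * (s powr (a - 1)
            * (\<Sum>i\<in>I. w i * parallel_kernel s (p i) (q i)))) \<partial>lborel)
       = ennreal (\<Sum>i\<in>I. w i * (p i powr a * q i powr (1 - a))) * kernel_const a"
proof -
  have "(\<integral>\<^sup>+s. ennreal (indicator {0<..} s * (s powr (a - 1)
            * (\<Sum>i\<in>I. w i * parallel_kernel s (p i) (q i)))) \<partial>lborel)
      = (\<integral>\<^sup>+s. (\<Sum>i\<in>I. ennreal (w i)
            * ennreal (indicator {0<..} s * (s powr (a - 1) * parallel_kernel s (p i) (q i)))) \<partial>lborel)"
  proof (rule nn_integral_cong)
    fix s :: real
    show "ennreal (indicator {0<..} s * (s powr (a - 1) * (\<Sum>i\<in>I. w i * parallel_kernel s (p i) (q i))))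
        = (\<Sum>i\<in>I. ennreal (w i) * ennreal (indicator {0<..} s * (s powr (a - 1) * parallel_kernel s (p i) (q i))))"
    proof (cases "s > 0")
      case True
      then show ?thesis
        using nonneg parallel_kernel_nonneg
        by (simp add: ennreal_mult'[symmetric] sum_ennreal sum_distrib_left mult_ac)
    qed simp
  qed
  also have "\<dots> = (\<Sum>i\<in>I. ennreal (w i) * (\<integral>\<^sup>+s. ennreal (indicator {0<..} s
            * (s powr (a - 1) * parallel_kernel s (p i) (q i))) \<partial>lborel))"
    by (subst nn_integral_sum) (auto intro!: sum.cong nn_integral_cmult)
  also have "\<dots> = (\<Sum>i\<in>I. ennreal (w i * (p i powr a * q i powr (1 - a))) * kernel_const a)"
    using nonneg a
    by (intro sum.cong refl, subst nn_integral_parallel_kernel) (auto simp: ennreal_mult' mult.assoc)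
  also have "\<dots> = ennreal (\<Sum>i\<in>I. w i * (p i powr a * q i powr (1 - a))) * kernel_const a"
    using nonneg by (simp add: sum_distrib_right[symmetric] sum_ennreal)
  finally show ?thesis .
qed

lemma sum_powr_mono_by_parallel_kernel:
  fixes I :: "'i set" and J :: "'j set"
  assumes "finite I" "finite J" and a: "0 < a" "a < 1"
    and nonneg: "\<And>i. i \<in> I \<Longrightarrow> w i \<ge> 0 \<and> p i \<ge> 0 \<and> q i \<ge> 0"
    and nonneg': "\<And>j. j \<in> J \<Longrightarrow> w' j \<ge> 0 \<and> p' j \<ge> 0 \<and> q' j \<ge> 0"
    and le: "\<And>s. s > 0 \<Longrightarrow> (\<Sum>i\<in>I. w i * parallel_kernel s (p i) (q i))
                            \<le> (\<Sum>j\<in>J. w' j * parallel_kernel s (p' j) (q' j))"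
  shows "(\<Sum>i\<in>I. w i * (p i powr a * q i powr (1 - a)))
       \<le> (\<Sum>j\<in>J. w' j * (p' j powr a * q' j powr (1 - a)))"
proof -
  have "(\<integral>\<^sup>+s. ennreal (indicator {0<..} s * (s powr (a - 1)
            * (\<Sum>i\<in>I. w i * parallel_kernel s (p i) (q i)))) \<partial>lborel)
     \<le> (\<integral>\<^sup>+s. ennreal (indicator {0<..} s * (s powr (a - 1)
            * (\<Sum>j\<in>J. w' j * parallel_kernel s (p' j) (q' j)))) \<partial>lborel)"
    using le by (intro nn_integral_mono) (auto intro!: ennreal_leI mult_left_mono simp: indicator_def)
  then have "ennreal (\<Sum>i\<in>I. w i * (p i powr a * q i powr (1 - a))) * kernel_const a
      \<le> ennreal (\<Sum>j\<in>J. w' j * (p' j powr a * q' j powr (1 - a))) * kernel_const a"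
    using assms by (simp add: nn_integral_sum_parallel_kernel)
  then have "ennreal (\<Sum>i\<in>I. w i * (p i powr a * q i powr (1 - a)))
      \<le> ennreal (\<Sum>j\<in>J. w' j * (p' j powr a * q' j powr (1 - a)))"
    using kernel_const_pos[OF a] kernel_const_finite[OF a]
    by (simp add: ennreal_mult_le_mult_iff mult.commute)
  moreover have "(\<Sum>j\<in>J. w' j * (p' j powr a * q' j powr (1 - a))) \<ge> 0"
    using nonneg' by (intro sum_nonneg) auto
  ultimately show ?thesis by simp
qed

section \<open>Matrices and the complex inner product\<close>

lemma matrix_add_rdistrib: "(B + C) ** A = B ** A + C ** (A :: 'a::semiring_1^'n^'m)"
  by (vector matrix_matrix_mult_def sum.distrib[symmetric] field_simps)

lemma adj_nth [simp]: "adj M $ i $ j = cnj (M $ j $ i)"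
  by (simp add: adj_def)

lemma adj_adj [simp]: "adj (adj M) = M"
  by (simp add: vec_eq_iff)

lemma adj_mult: "adj (A ** B) = adj B ** adj (A :: 'n::finite cmat)"
  by (simp add: vec_eq_iff matrix_matrix_mult_def mult.commute)

lemma adj_add: "adj (A + B) = adj A + adj (B :: 'n::finite cmat)"
  by (simp add: vec_eq_iff)

lemma adj_zero [simp]: "adj (0 :: 'n::finite cmat) = 0"
  by (simp add: vec_eq_iff)

lemma adj_mat [simp]: "adj (mat c :: 'n::finite cmat) = mat (cnj c)"
  by (simp add: vec_eq_iff mat_def)

lemma adj_sum_list: "adj (\<Sum>x\<leftarrow>xs. f x) = (\<Sum>x\<leftarrow>xs. adj (f x :: 'n::finite cmat))"
  by (induction xs) (auto simp: adj_add)

lemma matrix_mult_sum_list_right: "A ** (\<Sum>x\<leftarrow>xs. f x) = (\<Sum>x\<leftarrow>xs. A ** (f x :: 'n::finite cmat))"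
  by (induction xs) (auto simp: matrix_add_ldistrib)

lemma matrix_mult_sum_list_left: "(\<Sum>x\<leftarrow>xs. f x) ** A = (\<Sum>x\<leftarrow>xs. (f x :: 'n::finite cmat) ** A)"
  by (induction xs) (auto simp: matrix_add_rdistrib)

lemma trace_sum_list: "trace (\<Sum>x\<leftarrow>xs. f x) = (\<Sum>x\<leftarrow>xs. trace (f x :: 'n::finite cmat))"
  by (induction xs) (auto simp: trace_add trace_0[unfolded mat_0])

lemma trace_mult_cycle: "trace ((A :: 'n::finite cmat) ** B ** C) = trace (B ** (C ** A))"
  by (metis matrix_mul_assoc trace_mul_sym)

lemma diag_mat_nth [simp]: "diag_mat d $ i $ j = (if i = j then d i else 0)"
  by (simp add: diag_mat_def)

lemma matrix_mult_diag_mat_nth: "(W ** diag_mat d) $ i $ j = W $ i $ j * d j"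
  unfolding matrix_matrix_mult_def by (simp add: if_distrib if_distribR cong: if_cong)

lemma diag_mat_mult_nth: "(diag_mat d ** W) $ i $ j = d i * W $ i $ j"
  unfolding matrix_matrix_mult_def by (simp add: if_distrib if_distribR cong: if_cong)

lemma diag_mat_mult_diag_mat: "diag_mat p ** diag_mat q = diag_mat (\<lambda>i. p i * q i)"
  by (simp add: vec_eq_iff diag_mat_mult_nth)

lemma trace_diag_mat_mult: "trace (diag_mat p ** B) = (\<Sum>k\<in>UNIV. p k * B $ k $ k)"
  by (simp add: trace_def diag_mat_mult_nth)

lemma unitary_mult: "unitary U \<Longrightarrow> unitary V \<Longrightarrow> unitary (U ** V)"
  unfolding unitary_def adj_mult by (metis matrix_mul_assoc matrix_mul_lid)

lemma unitary_cancel [simp]: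
  assumes "unitary U"
  shows "U ** adj U = mat 1" "adj U ** U = mat 1" "X ** U ** adj U = X" "X ** adj U ** U = X"
  using assms unfolding unitary_def by (simp_all add: matrix_mul_assoc[symmetric])

lemma trace_unitary_conj: "unitary U \<Longrightarrow> trace (U ** X ** adj U) = trace X"
  by (metis trace_mul_sym matrix_mul_assoc matrix_mul_lid unitary_cancel(2))

definition cinner :: "complex^'n::finite \<Rightarrow> complex^'n \<Rightarrow> complex" where
  "cinner x y = (\<Sum>i\<in>UNIV. cnj (x $ i) * y $ i)"

lemma cinner_adj: "cinner x (M *v y) = cinner (adj M *v x) y"
  unfolding cinner_def matrix_vector_mult_def
  by (simp add: sum_distrib_left sum_distrib_right mult_ac) (rule sum.swap)

lemma cinner_commute: "cnj (cinner x y) = cinner y x"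
  unfolding cinner_def by (simp add: mult.commute)

lemma Re_cinner: "Re (cinner x y) = inner x y"
  unfolding cinner_def inner_vec_def inner_complex_def by (simp add: Re_sum)

lemma cinner_self: "cinner x x = complex_of_real ((norm x)\<^sup>2)"
proof -
  have "Im (cinner x x) = 0" unfolding cinner_def by (simp add: Im_sum)
  moreover have "Re (cinner x x) = (norm x)\<^sup>2" by (simp add: Re_cinner power2_norm_eq_inner)
  ultimately show ?thesis by (simp add: complex_eq_iff)
qed

lemma norm_sq_eq_Re_cinner: "(norm x)\<^sup>2 = Re (cinner x x)"
  by (simp add: cinner_self)

lemma scaleR_vec_nth: "(r *\<^sub>R (y :: complex^'n)) $ i = complex_of_real r * y $ i"
  by (simp add: scaleR_conv_of_real[where 'a=complex])

lemma cinner_add_right: "cinner x (y + z) = cinner x y + cinner x z"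
  unfolding cinner_def by (simp add: algebra_simps sum.distrib)

lemma cinner_add_left: "cinner (x + y) z = cinner x z + cinner y z"
  unfolding cinner_def by (simp add: algebra_simps sum.distrib)

lemma cinner_diff_right: "cinner x (y - z) = cinner x y - cinner x z"
  unfolding cinner_def by (simp add: algebra_simps sum_subtractf)

lemma cinner_scale_right: "cinner x (c *s y) = c * cinner x y"
  unfolding cinner_def by (simp add: algebra_simps sum_distrib_left)

lemma cinner_scale_left: "cinner (c *s x) y = cnj c * cinner x y"
  unfolding cinner_def by (simp add: algebra_simps sum_distrib_left)

lemma cinner_scaleR_right: "cinner x (r *\<^sub>R y) = complex_of_real r * cinner x y"
  unfolding cinner_def by (simp add: scaleR_vec_nth scaleR_conv_of_real[where 'a=complex] sum_distrib_left mult_ac)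

lemma cinner_scaleR_left: "cinner (r *\<^sub>R x) y = complex_of_real r * cinner x y"
  unfolding cinner_def by (simp add: scaleR_vec_nth scaleR_conv_of_real[where 'a=complex] sum_distrib_left mult_ac)

lemma cinner_zero_right [simp]: "cinner x 0 = 0"
  unfolding cinner_def by simp

lemma cinner_sum_right: "cinner x (\<Sum>i\<in>I. f i) = (\<Sum>i\<in>I. cinner x (f i))"
  by (induction I rule: infinite_finite_induct) (auto simp: cinner_add_right)

lemma matrix_vector_mult_scaleR_complex: "M *v (r *\<^sub>R x) = r *\<^sub>R (M *v (x :: complex^'n::finite))"
  by (simp add: vec_eq_iff matrix_vector_mult_def scaleR_vec_nth scaleR_conv_of_real[where 'a=complex]
      sum_distrib_left mult_ac)

lemma sum_matrix_vector_mult: "(\<Sum>i\<in>I. M i) *v x = (\<Sum>i\<in>I. M i *v (x :: complex^'n::finite))"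
  by (induction I rule: infinite_finite_induct) (auto simp: matrix_vector_mult_add_rdistrib)

lemma hermitian_cinner_swap: "hermitian M \<Longrightarrow> cinner x (M *v y) = cinner (M *v x) y"
  by (simp add: cinner_adj hermitian_def)

lemma psd_cinner_nonneg: "psd M \<Longrightarrow> 0 \<le> cinner x (M *v x)"
  unfolding psd_def cinner_def by blast

lemma psd_iff_cinner: "psd M \<longleftrightarrow> hermitian M \<and> (\<forall>x. 0 \<le> cinner x (M *v x))"
  unfolding psd_def cinner_def ..

section \<open>Spectral theorem and functional calculus\<close>

definition quad_form :: "'n::finite cmat \<Rightarrow> complex^'n \<Rightarrow> real" where
  "quad_form M x = Re (cinner x (M *v x))"

lemma continuous_on_vec_nth: "continuous_on S (\<lambda>x::'a::real_normed_vector^'n. x $ i)"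
  by (intro continuous_at_imp_continuous_on ballI isCont_vec_nth continuous_ident)

lemma continuous_on_quad_form: "continuous_on S (quad_form M)"
  unfolding quad_form_def cinner_def matrix_vector_mult_def
  by (intro continuous_intros continuous_on_vec_nth)

lemma quad_form_scaleR: "quad_form M (r *\<^sub>R x) = r\<^sup>2 * quad_form M x"
  unfolding quad_form_def
  by (simp add: matrix_vector_mult_scaleR_complex cinner_scaleR_left cinner_scaleR_right power2_eq_square)

lemma hermitian_cinner_real:
  assumes "hermitian M"
  shows "cinner x (M *v x) = complex_of_real (quad_form M x)"
proof -
  have "cnj (cinner x (M *v x)) = cinner x (M *v x)"
    using hermitian_cinner_swap[OF assms, of x x] by (simp add: cinner_commute)
  then have "Im (cinner x (M *v x)) = 0"
    by (metis Reals_cnj_iff complex_is_Real_iff)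
  then show ?thesis unfolding quad_form_def by (simp add: complex_eq_iff)
qed

lemma exists_nonzero_orthogonal:
  fixes v :: "'m \<Rightarrow> complex^'n::finite"
  assumes "finite I" and "card I < CARD('n)"
  shows "\<exists>x. x \<noteq> 0 \<and> (\<forall>j\<in>I. cinner (v j) x = 0)"
proof -
  \<comment> \<open>Orthogonality to \<open>v j\<close> and to \<open>\<i> v j\<close> in the real sense is complex orthogonality to \<open>v j\<close>.\<close>
  let ?B = "v ` I \<union> (\<lambda>j. \<i> *s v j) ` I"
  have "dim ?B \<le> card ?B" using assms by (intro dim_le_card span_superset) auto
  also have "\<dots> \<le> card (v ` I) + card ((\<lambda>j. \<i> *s v j) ` I)" by (rule card_Un_le)
  also have "\<dots> \<le> card I + card I" by (intro add_mono card_image_le assms)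
  also have "\<dots> < DIM(complex^'n)" using assms by simp
  finally obtain x where x: "x \<noteq> 0" "\<And>y. y \<in> span ?B \<Longrightarrow> orthogonal x y"
    using orthogonal_to_subspace_exists by blast
  have "cinner (v j) x = 0" if "j \<in> I" for j
  proof -
    have "orthogonal x (v j)" "orthogonal x (\<i> *s v j)"
      using x(2) that by (simp_all add: span_base)
    then have "Re (cinner (v j) x) = 0" "Re (cinner (\<i> *s v j) x) = 0"
      by (simp_all add: orthogonal_def Re_cinner inner_commute)
    then show ?thesis by (simp add: cinner_scale_left complex_eq_iff)
  qed
  with x show ?thesis by blast
qed

lemma quad_form_max_on_subspace:
  fixes S :: "(complex^'n::finite) set"
  assumes S: "subspace S" and x0: "x0 \<in> S" "x0 \<noteq> 0"
  obtains x where "x \<in> S" "norm x = 1" "\<And>y. y \<in> S \<Longrightarrow> quad_form M y \<le> quad_form M x * (norm y)\<^sup>2"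
proof -
  define T where "T = sphere 0 1 \<inter> S"
  have "compact T" unfolding T_def using S by (intro compact_Int_closed compact_sphere closed_subspace)
  moreover have "(1 / norm x0) *\<^sub>R x0 \<in> T"
    unfolding T_def using x0 subspace_scale[OF S x0(1)] by simp
  ultimately have "\<exists>x\<in>T. \<forall>y\<in>T. quad_form M y \<le> quad_form M x"
    by (intro continuous_attains_sup continuous_on_quad_form) auto
  then obtain x where x: "x \<in> T" and max: "\<And>y. y \<in> T \<Longrightarrow> quad_form M y \<le> quad_form M x"
    by blast
  have "quad_form M y \<le> quad_form M x * (norm y)\<^sup>2" if y: "y \<in> S" for y
  proof (cases "y = 0")
    case False
    then have "(1 / norm y) *\<^sub>R y \<in> T" unfolding T_def using subspace_scale[OF S y] by simp
    then have "(1 / norm y)\<^sup>2 * quad_form M y \<le> quad_form M x"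
      using max[of "(1 / norm y) *\<^sub>R y"] by (simp add: quad_form_scaleR)
    then show ?thesis using False by (simp add: field_simps power2_eq_square)
  qed (simp add: quad_form_def)
  with x that show ?thesis unfolding T_def by auto
qed

lemma quad_form_max_stationary:
  fixes M :: "'n::finite cmat"
  assumes herm: "hermitian M" and S: "subspace S"
    and x: "x \<in> S" "norm x = 1" and z: "z \<in> S" "cinner x z = 0"
    and max: "\<And>y. y \<in> S \<Longrightarrow> quad_form M y \<le> quad_form M x * (norm y)\<^sup>2"
  shows "Re (cinner z (M *v x)) = 0"
proof (rule ccontr)
  define \<mu> R where "\<mu> = quad_form M x" and "R = Re (cinner z (M *v x))"
  assume "R \<noteq> 0"
  define K where "K = \<mu> * (norm z)\<^sup>2 - quad_form M z"
  define t where "t = R / (\<bar>K\<bar> + 1)"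
  have "t \<noteq> 0" and tR: "t * R = t\<^sup>2 * (\<bar>K\<bar> + 1)"
    using \<open>R \<noteq> 0\<close> unfolding t_def by (auto simp: power2_eq_square field_simps add_nonneg_eq_0_iff)
  have "cinner x (M *v z) = cnj (cinner z (M *v x))"
    by (simp add: hermitian_cinner_swap[OF herm] cinner_commute)
  then have "Re (cinner x (M *v z)) = R"
    unfolding R_def by simp
  then have qf: "quad_form M (x + t *\<^sub>R z) = \<mu> + 2 * t * R + t\<^sup>2 * quad_form M z"
    unfolding quad_form_def \<mu>_def R_def
    by (simp add: matrix_vector_right_distrib matrix_vector_mult_scaleR_complex cinner_add_left
        cinner_add_right cinner_scaleR_left cinner_scaleR_right power2_eq_square algebra_simps)
  have norm: "(norm (x + t *\<^sub>R z))\<^sup>2 = 1 + t\<^sup>2 * (norm z)\<^sup>2"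
    using x(2) z(2) cinner_commute[of x z] unfolding norm_sq_eq_Re_cinner
    by (simp add: cinner_add_left cinner_add_right cinner_scaleR_left cinner_scaleR_right
        norm_sq_eq_Re_cinner[symmetric] power2_eq_square)
  have "x + t *\<^sub>R z \<in> S"
    by (intro subspace_add[OF S] x(1) subspace_scale[OF S z(1)])
  from max[OF this] have "\<mu> + 2 * t * R + t\<^sup>2 * quad_form M z \<le> \<mu> * (1 + t\<^sup>2 * (norm z)\<^sup>2)"
    unfolding qf norm \<mu>_def[symmetric] .
  then have "2 * (t * R) \<le> t\<^sup>2 * K"
    unfolding K_def by (simp add: algebra_simps)
  also have "\<dots> \<le> t\<^sup>2 * \<bar>K\<bar>"
    by (intro mult_left_mono) auto
  finally have "2 * (t * R) \<le> t\<^sup>2 * \<bar>K\<bar>" .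
  then have "t\<^sup>2 * (\<bar>K\<bar> + 2) \<le> 0"
    unfolding tR by (simp add: algebra_simps)
  moreover have "t\<^sup>2 * (\<bar>K\<bar> + 2) > 0"
    using \<open>t \<noteq> 0\<close> by (simp add: add_pos_nonneg)
  ultimately show False by simp
qed

lemma quad_form_max_is_eigenvector:
  fixes M :: "'n::finite cmat"
  assumes herm: "hermitian M" and S: "subspace S"
    and x: "x \<in> S" "norm x = 1" "M *v x \<in> S"
    and max: "\<And>y. y \<in> S \<Longrightarrow> quad_form M y \<le> quad_form M x * (norm y)\<^sup>2"
  shows "M *v x = complex_of_real (quad_form M x) *s x"
proof -
  define \<mu> where "\<mu> = quad_form M x"
  define z where "z = M *v x - complex_of_real \<mu> *s x"
  have "complex_of_real \<mu> *s x = \<mu> *\<^sub>R x"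
    by (simp add: vec_eq_iff scaleR_conv_of_real[where 'a=complex])
  moreover have "M *v x - \<mu> *\<^sub>R x \<in> S"
    by (intro subspace_diff[OF S] x(3) subspace_scale[OF S x(1)])
  ultimately have "z \<in> S" unfolding z_def by simp
  have "cinner x x = 1" using x(2) by (simp add: cinner_self)
  then have "cinner x z = 0"
    unfolding z_def \<mu>_def by (simp add: cinner_diff_right cinner_scale_right hermitian_cinner_real[OF herm])
  moreover have "M *v x = z + complex_of_real \<mu> *s x"
    unfolding z_def by simp
  ultimately have "cinner z (M *v x) = complex_of_real ((norm z)\<^sup>2)"
    using cinner_commute[of x z] by (simp add: cinner_add_right cinner_scale_right cinner_self)
  with quad_form_max_stationary[OF herm S x(1,2) \<open>z \<in> S\<close> \<open>cinner x z = 0\<close> max] have "z = 0"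
    by simp
  then show ?thesis unfolding z_def \<mu>_def by simp
qed

lemma hermitian_eigenvector_orthogonal:
  fixes M :: "'n::finite cmat" and v :: "'m \<Rightarrow> complex^'n"
  assumes herm: "hermitian M" and "finite I" "card I < CARD('n)"
    and eig: "\<forall>j\<in>I. M *v v j = complex_of_real (l j) *s v j"
  shows "\<exists>w \<mu>. norm w = 1 \<and> (\<forall>j\<in>I. cinner (v j) w = 0) \<and> M *v w = complex_of_real \<mu> *s w"
proof -
  define S where "S = {x. \<forall>j\<in>I. cinner (v j) x = 0}"
  have S: "subspace S"
    unfolding S_def subspace_def by (simp add: cinner_add_right cinner_scaleR_right)
  have invariant: "M *v x \<in> S" if "x \<in> S" for x
    using that eig unfolding S_def by (simp add: hermitian_cinner_swap[OF herm] cinner_scale_left)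
  obtain x0 where "x0 \<noteq> 0" "x0 \<in> S"
    using exists_nonzero_orthogonal[OF assms(2,3)] unfolding S_def by auto
  then obtain x where x: "x \<in> S" "norm x = 1"
    and max: "\<And>y. y \<in> S \<Longrightarrow> quad_form M y \<le> quad_form M x * (norm y)\<^sup>2"
    using quad_form_max_on_subspace[OF S] by metis
  have "M *v x = complex_of_real (quad_form M x) *s x"
    using quad_form_max_is_eigenvector[OF herm S x invariant[OF x(1)] max] .
  then show ?thesis
    using x unfolding S_def by (intro exI[of _ x] exI[of _ "quad_form M x"]) simp
qed

lemma hermitian_orthonormal_eigenbasis:
  fixes M :: "'n::finite cmat"
  assumes herm: "hermitian M"
  obtains v :: "'n \<Rightarrow> complex^'n" and l
  where "\<And>i j. cinner (v i) (v j) = (if i = j then 1 else 0)"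
    and "\<And>i. M *v v i = complex_of_real (l i) *s v i"
proof -
  have "\<exists>v l. (\<forall>i\<in>I. \<forall>j\<in>I. cinner (v i) (v j) = (if i = j then 1 else 0))
            \<and> (\<forall>i\<in>I. M *v v i = complex_of_real (l i) *s v i)" if "finite I" for I :: "'n set"
    using that
  proof (induction I rule: finite_induct)
    case (insert x F)
    then obtain v l where on: "\<forall>i\<in>F. \<forall>j\<in>F. cinner (v i) (v j) = (if i = j then 1 else 0)"
      and eig: "\<forall>i\<in>F. M *v v i = complex_of_real (l i) *s v i" by blast
    have "card F < CARD('n)"
      using insert by (intro psubset_card_mono) auto
    then obtain w \<mu> where w: "norm w = 1" "\<forall>j\<in>F. cinner (v j) w = 0" "M *v w = complex_of_real \<mu> *s w"
      using hermitian_eigenvector_orthogonal[OF herm insert(1) _ eig] by blast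
    have "cinner w w = 1" using w(1) by (simp add: cinner_self)
    moreover have "\<forall>j\<in>F. cinner w (v j) = 0" using w(2) cinner_commute by (metis complex_cnj_zero)
    ultimately show ?case
      using on eig w insert(2) by (intro exI[of _ "v(x := w)"] exI[of _ "l(x := \<mu>)"]) auto
  qed simp
  from this[OF finite[of UNIV]] that show ?thesis by auto
qed

lemma unitary_if_adj_mult_left: "adj U ** U = mat 1 \<Longrightarrow> unitary U"
  unfolding unitary_def using matrix_left_right_inverse by blast

lemma hermitian_spectral:
  fixes M :: "'n::finite cmat"
  assumes herm: "hermitian M"
  obtains U l where "unitary U" "M = U ** diag_mat (\<lambda>i. complex_of_real (l i)) ** adj U"
    and "\<And>i. complex_of_real (l i) = cinner (column i U) (M *v column i U)"
proof -
  obtain v :: "'n \<Rightarrow> complex^'n" and l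
    where on: "\<And>i j. cinner (v i) (v j) = (if i = j then 1 else 0)"
      and eig: "\<And>i. M *v v i = complex_of_real (l i) *s v i"
    using hermitian_orthonormal_eigenbasis[OF herm] by blast
  define U :: "'n cmat" where "U = (\<chi> r c. v c $ r)"
  have col: "column i U = v i" for i
    unfolding U_def column_def by (simp add: vec_eq_iff)
  have "(adj U ** U) $ i $ j = cinner (v i) (v j)" for i j
    unfolding U_def matrix_matrix_mult_def cinner_def by simp
  then have U: "unitary U"
    using on by (intro unitary_if_adj_mult_left) (simp add: vec_eq_iff mat_def)
  have "M ** U = U ** diag_mat (\<lambda>i. complex_of_real (l i))"
    using eig unfolding U_def
    by (simp add: vec_eq_iff matrix_mult_diag_mat_nth)
      (simp add: matrix_matrix_mult_def matrix_vector_mult_def vec_eq_iff mult.commute)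
  then have "M = U ** diag_mat (\<lambda>i. complex_of_real (l i)) ** adj U"
    using U by (metis unitary_cancel(3))
  moreover have "complex_of_real (l i) = cinner (column i U) (M *v column i U)" for i
    using on[of i i] by (simp add: col eig cinner_scale_right)
  ultimately show ?thesis using U that by blast
qed

lemma psd_spectral:
  fixes M :: "'n::finite cmat"
  assumes "psd M"
  obtains U d where "unitary U" "\<And>i. 0 \<le> d i" "M = U ** diag_mat (\<lambda>i. complex_of_real (d i)) ** adj U"
proof -
  obtain U l where U: "unitary U" "M = U ** diag_mat (\<lambda>i. complex_of_real (l i)) ** adj U"
    and l: "\<And>i. complex_of_real (l i) = cinner (column i U) (M *v column i U)"
    using hermitian_spectral assms unfolding psd_def by blast
  have "0 \<le> complex_of_real (l i)" for i
    unfolding l by (rule psd_cinner_nonneg[OF assms])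
  then have "0 \<le> l i" for i
    by (simp add: less_eq_complex_def)
  with U that show ?thesis by blast
qed

lemma spectral_calculus_unique:
  fixes U V :: "'n::finite cmat"
  assumes U: "unitary U" and V: "unitary V"
    and eq: "U ** diag_mat d ** adj U = V ** diag_mat e ** adj V"
  shows "U ** diag_mat (\<lambda>i. f (d i)) ** adj U = V ** diag_mat (\<lambda>i. f (e i)) ** adj V"
proof -
  \<comment> \<open>\<open>W = V\<^sup>* U\<close> intertwines the two diagonals, so it only connects equal eigenvalues.\<close>
  define W where "W = adj V ** U"
  have "W ** diag_mat d = adj V ** (U ** diag_mat d ** adj U) ** U"
    unfolding W_def using U by (simp add: matrix_mul_assoc)
  also have "\<dots> = diag_mat e ** W"
    unfolding eq W_def using V by (simp add: matrix_mul_assoc)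
  finally have WD: "W ** diag_mat d = diag_mat e ** W" .
  have "W $ i $ j * f (d j) = f (e i) * W $ i $ j" for i j
  proof (cases "W $ i $ j = 0")
    case False
    have "W $ i $ j * d j = e i * W $ i $ j"
      using arg_cong[OF WD, of "\<lambda>X. X $ i $ j"] by (simp add: matrix_mult_diag_mat_nth diag_mat_mult_nth)
    then show ?thesis using False by (simp add: mult.commute)
  qed simp
  then have WfD: "W ** diag_mat (\<lambda>i. f (d i)) = diag_mat (\<lambda>i. f (e i)) ** W"
    by (simp add: vec_eq_iff matrix_mult_diag_mat_nth diag_mat_mult_nth)
  have U_eq: "U = V ** W" and adjU_eq: "adj U = adj W ** adj V"
    unfolding W_def using V by (simp_all add: matrix_mul_assoc adj_mult)
  have "U ** diag_mat (\<lambda>i. f (d i)) ** adj U = V ** (W ** diag_mat (\<lambda>i. f (d i))) ** adj W ** adj V"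
    unfolding adjU_eq by (subst U_eq) (simp add: matrix_mul_assoc)
  also have "\<dots> = V ** diag_mat (\<lambda>i. f (e i)) ** (W ** adj W) ** adj V"
    unfolding WfD by (simp add: matrix_mul_assoc)
  also have "W ** adj W = mat 1"
    unfolding W_def using U V by (simp add: adj_mult matrix_mul_assoc)
  finally show ?thesis by simp
qed

lemma mpow_spectral:
  fixes U :: "'n::finite cmat"
  assumes U: "unitary U" and d: "\<And>i. 0 \<le> d i"
    and \<rho>: "\<rho> = U ** diag_mat (\<lambda>i. complex_of_real (d i)) ** adj U"
  shows "mpow \<rho> a = U ** diag_mat (\<lambda>i. complex_of_real (d i powr a)) ** adj U"
proof -
  let ?P = "\<lambda>X. \<exists>U d. unitary U \<and> (\<forall>i. 0 \<le> d i) \<and>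
       \<rho> = U ** diag_mat (\<lambda>i. complex_of_real (d i)) ** adj U \<and>
       X = U ** diag_mat (\<lambda>i. complex_of_real (d i powr a)) ** adj U"
  have "?P (mpow \<rho> a)"
    unfolding mpow_def by (rule someI[of ?P]) (use U d \<rho> in blast)
  then obtain U' d' where U': "unitary U'"
    and \<rho>': "\<rho> = U' ** diag_mat (\<lambda>i. complex_of_real (d' i)) ** adj U'"
    and mpow: "mpow \<rho> a = U' ** diag_mat (\<lambda>i. complex_of_real (d' i powr a)) ** adj U'" by blast
  have "U' ** diag_mat (\<lambda>i. complex_of_real (Re (complex_of_real (d' i)) powr a)) ** adj U'
      = U ** diag_mat (\<lambda>i. complex_of_real (Re (complex_of_real (d i)) powr a)) ** adj U"
    by (rule spectral_calculus_unique[OF U' U]) (use \<rho>' \<rho> in simp)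
  then show ?thesis using mpow by simp
qed

lemma mpow_unitary_conj:
  assumes V: "unitary V" and "psd \<rho>"
  shows "mpow (V ** \<rho> ** adj V) c = V ** mpow \<rho> c ** adj V"
proof -
  obtain U d where U: "unitary U" "\<And>i. 0 \<le> d i" "\<rho> = U ** diag_mat (\<lambda>i. complex_of_real (d i)) ** adj U"
    using psd_spectral[OF assms(2)] by blast
  have "V ** \<rho> ** adj V = (V ** U) ** diag_mat (\<lambda>i. complex_of_real (d i)) ** adj (V ** U)"
    unfolding U(3) by (simp add: adj_mult matrix_mul_assoc)
  then have "mpow (V ** \<rho> ** adj V) c = (V ** U) ** diag_mat (\<lambda>i. complex_of_real (d i powr c)) ** adj (V ** U)"
    by (rule mpow_spectral[OF unitary_mult[OF V U(1)] U(2)])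
  also have "\<dots> = V ** mpow \<rho> c ** adj V"
    unfolding mpow_spectral[OF U] by (simp add: adj_mult matrix_mul_assoc)
  finally show ?thesis .
qed

lemma mpow_mult_complement:
  assumes "psd \<rho>"
  shows "mpow \<rho> a ** mpow \<rho> (1 - a) = \<rho>"
proof -
  obtain U d where U: "unitary U" "\<And>i. 0 \<le> d i" "\<rho> = U ** diag_mat (\<lambda>i. complex_of_real (d i)) ** adj U"
    using psd_spectral[OF assms] by blast
  have "d i powr a * d i powr (1 - a) = d i" for i
    using U(2)[of i] by (simp add: powr_add[symmetric])
  then have diag: "diag_mat (\<lambda>i. complex_of_real (d i powr a)) ** diag_mat (\<lambda>i. complex_of_real (d i powr (1 - a)))
      = diag_mat (\<lambda>i. complex_of_real (d i))"
    by (simp add: diag_mat_mult_diag_mat flip: of_real_mult)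
  have "mpow \<rho> a ** mpow \<rho> (1 - a) = U ** (diag_mat (\<lambda>i. complex_of_real (d i powr a))
      ** diag_mat (\<lambda>i. complex_of_real (d i powr (1 - a)))) ** adj U"
    unfolding mpow_spectral[OF U] using U(1) by (simp add: matrix_mul_assoc)
  also have "\<dots> = \<rho>"
    unfolding diag U(3) ..
  finally show ?thesis .
qed

section \<open>Splitting costs and monotonicity of Wigner--Yanase--Dyson terms\<close>

lemma parallel_kernel_le_split:
  fixes x y :: complex
  assumes p: "p \<ge> 0" and q: "q \<ge> 0" and s: "s > 0"
  shows "(cmod (x + y))\<^sup>2 * parallel_kernel s p q \<le> q * (cmod x)\<^sup>2 + (p / s) * (cmod y)\<^sup>2"
proof (cases "s * q + p = 0")
  case True
  then show ?thesis using p q s by (simp add: parallel_kernel_def add_nonneg_eq_0_iff)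
next
  case False
  then have D: "s * q + p > 0" using p q s by (simp add: add_nonneg_pos less_le)
  define u w where "u = cmod x" and "w = cmod y"
  have "(cmod (x + y))\<^sup>2 \<le> (u + w)\<^sup>2"
    unfolding u_def w_def by (intro power_mono norm_triangle_ineq) simp
  then have "(cmod (x + y))\<^sup>2 * (p * q) \<le> (u + w)\<^sup>2 * (p * q)"
    using p q by (intro mult_right_mono) auto
  \<comment> \<open>AM--GM in the form \<open>0 \<le> (s q u - p w)\<^sup>2\<close>.\<close>
  also have "\<dots> \<le> (s * q + p) * (q * u\<^sup>2 + (p / s) * w\<^sup>2)"
  proof -
    have "0 \<le> (s * q * u - p * w)\<^sup>2 / s" using s by simp
    then show ?thesis using s by (simp add: field_simps power2_eq_square)
  qed
  finally show ?thesis
    using D unfolding parallel_kernel_def u_def w_def by (simp add: field_simps)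
qed

lemma parallel_kernel_split_attained:
  fixes \<kappa> :: complex
  assumes p: "p \<ge> 0" and q: "q \<ge> 0" and s: "s > 0"
  defines "r \<equiv> (if p + s * q = 0 then 1 else p / (p + s * q))"
  shows "q * (cmod (complex_of_real r * \<kappa>))\<^sup>2 + (p / s) * (cmod (\<kappa> - complex_of_real r * \<kappa>))\<^sup>2
       = (cmod \<kappa>)\<^sup>2 * parallel_kernel s p q"
proof (cases "p + s * q = 0")
  case True
  then show ?thesis using p q s by (simp add: parallel_kernel_def r_def add_nonneg_eq_0_iff)
next
  case False
  then have D: "p + s * q > 0" using p q s by (simp add: add_nonneg_pos less_le)
  have r: "r = p / (p + s * q)" and r1: "1 - r = s * q / (p + s * q)"
    using False D unfolding r_def by (simp_all add: field_simps)
  have "r \<ge> 0" "1 - r \<ge> 0" using D p q s unfolding r r1 by simp_all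
  have "\<kappa> - complex_of_real r * \<kappa> = complex_of_real (1 - r) * \<kappa>"
    by (simp add: algebra_simps)
  then have norms: "cmod (complex_of_real r * \<kappa>) = r * cmod \<kappa>"
    "cmod (\<kappa> - complex_of_real r * \<kappa>) = (1 - r) * cmod \<kappa>"
    using \<open>r \<ge> 0\<close> \<open>1 - r \<ge> 0\<close> by (simp_all add: norm_mult del: of_real_diff)
  define E where "E = p + s * q"
  have "q * (p / E)\<^sup>2 + (p / s) * (s * q / E)\<^sup>2 = p * q * (p + s * q) / E\<^sup>2"
    using s by (simp add: field_simps power2_eq_square add_divide_distrib)
  also have "\<dots> = p * q / (s * q + p)"
    using D unfolding E_def by (simp add: power2_eq_square add.commute)
  finally have "q * r\<^sup>2 + (p / s) * (1 - r)\<^sup>2 = p * q / (s * q + p)"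
    unfolding E_def by (subst r1, subst r)
  moreover have "q * (r * cmod \<kappa>)\<^sup>2 + (p / s) * ((1 - r) * cmod \<kappa>)\<^sup>2
      = (q * r\<^sup>2 + (p / s) * (1 - r)\<^sup>2) * (cmod \<kappa>)\<^sup>2"
    by (simp only: power_mult_distrib distrib_right mult.assoc)
  ultimately show ?thesis
    unfolding norms parallel_kernel_def by (simp only: mult.commute)
qed

definition wyd_trace :: "real \<Rightarrow> 'n::finite cmat \<Rightarrow> 'n cmat \<Rightarrow> complex" where
  "wyd_trace a \<rho> K = trace (mpow \<rho> a ** (K ** mpow \<rho> (1 - a) ** adj K))"

definition split_cost :: "'n::finite cmat \<Rightarrow> real \<Rightarrow> 'n cmat \<Rightarrow> 'n cmat \<Rightarrow> complex" where
  "split_cost \<rho> s X Y = trace (\<rho> ** (adj X ** X)) + complex_of_real (1 / s) * trace (\<rho> ** (Y ** adj Y))"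

definition wyd_spectral :: "real \<Rightarrow> ('n::finite \<Rightarrow> real) \<Rightarrow> 'n cmat \<Rightarrow> real" where
  "wyd_spectral a d A = (\<Sum>j\<in>UNIV. \<Sum>k\<in>UNIV. (cmod (A $ j $ k))\<^sup>2 * (d j powr a * d k powr (1 - a)))"

definition parallel_spectral :: "real \<Rightarrow> ('n::finite \<Rightarrow> real) \<Rightarrow> 'n cmat \<Rightarrow> real" where
  "parallel_spectral s d A = (\<Sum>j\<in>UNIV. \<Sum>k\<in>UNIV. (cmod (A $ j $ k))\<^sup>2 * parallel_kernel s (d j) (d k))"

lemma mult_cnj_eq_cmod_sq: "z * cnj z = (complex_of_real (cmod z))\<^sup>2" "cnj z * z = (complex_of_real (cmod z))\<^sup>2"
  using complex_norm_square[of z] by (simp_all add: mult.commute)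

lemma trace_diag_sandwich:
  "trace (diag_mat (\<lambda>i. complex_of_real (p i)) ** A ** diag_mat (\<lambda>i. complex_of_real (q i)) ** adj A)
   = complex_of_real (\<Sum>j\<in>UNIV. \<Sum>k\<in>UNIV. (cmod (A $ j $ k))\<^sup>2 * (p j * q k))"
proof -
  have "trace (diag_mat (\<lambda>i. complex_of_real (p i)) ** A ** diag_mat (\<lambda>i. complex_of_real (q i)) ** adj A)
     = (\<Sum>j\<in>UNIV. \<Sum>k\<in>UNIV. complex_of_real (p j) * A $ j $ k * complex_of_real (q k) * cnj (A $ j $ k))"
    unfolding trace_def matrix_matrix_mult_def[of _ "adj A"]
    by (simp add: matrix_mult_diag_mat_nth diag_mat_mult_nth)
  also have "\<dots> = (\<Sum>j\<in>UNIV. \<Sum>k\<in>UNIV. complex_of_real ((cmod (A $ j $ k))\<^sup>2 * (p j * q k)))"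
    by (intro sum.cong refl) (simp add: mult_cnj_eq_cmod_sq mult_ac)
  finally show ?thesis by simp
qed

lemma trace_diag_adj_mult_self:
  "trace (diag_mat (\<lambda>i. complex_of_real (p i)) ** (adj A ** A))
   = complex_of_real (\<Sum>j\<in>UNIV. \<Sum>k\<in>UNIV. p k * (cmod (A $ j $ k))\<^sup>2)"
  "trace (diag_mat (\<lambda>i. complex_of_real (p i)) ** (A ** adj A))
   = complex_of_real (\<Sum>j\<in>UNIV. \<Sum>k\<in>UNIV. p j * (cmod (A $ j $ k))\<^sup>2)"
  unfolding trace_diag_mat_mult
  by (simp_all add: matrix_matrix_mult_def sum_distrib_left mult_cnj_eq_cmod_sq mult_ac)
    (subst sum.swap, simp)

lemma wyd_trace_spectral:
  assumes U: "unitary U" and d: "\<And>i. 0 \<le> d i"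
    and \<rho>: "\<rho> = U ** diag_mat (\<lambda>i. complex_of_real (d i)) ** adj U"
  shows "wyd_trace a \<rho> K = complex_of_real (wyd_spectral a d (adj U ** K ** U))"
proof -
  let ?Da = "diag_mat (\<lambda>i. complex_of_real (d i powr a))"
  let ?Db = "diag_mat (\<lambda>i. complex_of_real (d i powr (1 - a)))"
  let ?K = "adj U ** K ** U"
  have "wyd_trace a \<rho> K = trace (U ** (?Da ** ?K ** ?Db ** adj ?K) ** adj U)"
    unfolding wyd_trace_def mpow_spectral[OF U d \<rho>] using U by (simp add: adj_mult matrix_mul_assoc)
  also have "\<dots> = complex_of_real (wyd_spectral a d ?K)"
    unfolding trace_unitary_conj[OF U] wyd_spectral_def trace_diag_sandwich ..
  finally show ?thesis .
qed

lemma split_cost_spectral: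
  assumes U: "unitary U" and \<rho>: "\<rho> = U ** diag_mat (\<lambda>i. complex_of_real (d i)) ** adj U"
  shows "split_cost \<rho> s X Y = complex_of_real
      ((\<Sum>j\<in>UNIV. \<Sum>k\<in>UNIV. d k * (cmod ((adj U ** X ** U) $ j $ k))\<^sup>2)
     + (1 / s) * (\<Sum>j\<in>UNIV. \<Sum>k\<in>UNIV. d j * (cmod ((adj U ** Y ** U) $ j $ k))\<^sup>2))"
proof -
  let ?D = "diag_mat (\<lambda>i. complex_of_real (d i))"
  let ?X = "adj U ** X ** U" and ?Y = "adj U ** Y ** U"
  have "\<rho> ** (adj X ** X) = U ** (?D ** (adj ?X ** ?X)) ** adj U"
    and "\<rho> ** (Y ** adj Y) = U ** (?D ** (?Y ** adj ?Y)) ** adj U"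
    using U unfolding \<rho> by (simp_all add: adj_mult matrix_mul_assoc)
  then show ?thesis
    unfolding split_cost_def by (simp add: trace_unitary_conj[OF U] trace_diag_adj_mult_self)
qed

lemma parallel_spectral_le_split_cost:
  assumes U: "unitary U" and d: "\<And>i. 0 \<le> d i"
    and \<rho>: "\<rho> = U ** diag_mat (\<lambda>i. complex_of_real (d i)) ** adj U"
    and s: "s > 0"
  shows "parallel_spectral s d (adj U ** (X + Y) ** U) \<le> Re (split_cost \<rho> s X Y)"
proof -
  let ?X = "adj U ** X ** U" and ?Y = "adj U ** Y ** U"
  have "adj U ** (X + Y) ** U = ?X + ?Y"
    by (simp add: matrix_add_ldistrib matrix_add_rdistrib)
  then have "parallel_spectral s d (adj U ** (X + Y) ** U)
      = (\<Sum>j\<in>UNIV. \<Sum>k\<in>UNIV. (cmod (?X $ j $ k + ?Y $ j $ k))\<^sup>2 * parallel_kernel s (d j) (d k))"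
    unfolding parallel_spectral_def by simp
  also have "\<dots> \<le> (\<Sum>j\<in>UNIV. \<Sum>k\<in>UNIV. d k * (cmod (?X $ j $ k))\<^sup>2 + (d j / s) * (cmod (?Y $ j $ k))\<^sup>2)"
    by (intro sum_mono parallel_kernel_le_split d s)
  also have "\<dots> = Re (split_cost \<rho> s X Y)"
    unfolding split_cost_spectral[OF U \<rho>] by (simp add: sum.distrib sum_distrib_left)
  finally show ?thesis .
qed

lemma split_cost_attains_parallel_spectral:
  assumes U: "unitary U" and d: "\<And>i. 0 \<le> d i"
    and \<rho>: "\<rho> = U ** diag_mat (\<lambda>i. complex_of_real (d i)) ** adj U"
    and s: "s > 0"
  obtains X Y where "X + Y = K" "split_cost \<rho> s X Y = complex_of_real (parallel_spectral s d (adj U ** K ** U))"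
proof -
  \<comment> \<open>Split every matrix entry of \<open>K\<close> in the eigenbasis of \<open>\<rho>\<close> optimally.\<close>
  define K' where "K' = adj U ** K ** U"
  define r where "r = (\<lambda>j k. if d j + s * d k = 0 then 1 else d j / (d j + s * d k))"
  define X' :: "'a cmat" where "X' = (\<chi> j k. complex_of_real (r j k) * K' $ j $ k)"
  define X where "X = U ** X' ** adj U"
  define Y where "Y = U ** (K' - X') ** adj U"
  have "X + Y = U ** K' ** adj U"
    unfolding X_def Y_def by (simp add: matrix_add_ldistrib[symmetric] matrix_add_rdistrib[symmetric])
  also have "\<dots> = K"
    unfolding K'_def using U by (simp add: matrix_mul_assoc)
  finally have XY: "X + Y = K" .
  have "adj U ** X ** U = X'" "adj U ** Y ** U = K' - X'"
    unfolding X_def Y_def using U by (simp_all add: matrix_mul_assoc)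
  then have "split_cost \<rho> s X Y = complex_of_real (\<Sum>j\<in>UNIV. \<Sum>k\<in>UNIV.
        d k * (cmod (complex_of_real (r j k) * K' $ j $ k))\<^sup>2
      + (d j / s) * (cmod (K' $ j $ k - complex_of_real (r j k) * K' $ j $ k))\<^sup>2)"
    unfolding split_cost_spectral[OF U \<rho>] X'_def by (simp add: sum.distrib sum_distrib_left)
  also have "\<dots> = complex_of_real (parallel_spectral s d K')"
    unfolding parallel_spectral_def r_def by (simp only: parallel_kernel_split_attained d s)
  finally show ?thesis
    using that XY unfolding K'_def by blast
qed

lemma wyd_trace_mono_by_split_cost:
  fixes \<rho>1 K1 :: "'m::finite cmat" and \<rho>2 K2 :: "'n::finite cmat"
  assumes "psd \<rho>1" "psd \<rho>2" and a: "0 < a" "a < 1"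
    and split: "\<And>s X Y. s > 0 \<Longrightarrow> X + Y = K2 \<Longrightarrow>
      \<exists>X1 Y1. X1 + Y1 = K1 \<and> Re (split_cost \<rho>1 s X1 Y1) \<le> Re (split_cost \<rho>2 s X Y)"
  shows "wyd_trace a \<rho>1 K1 \<le> wyd_trace a \<rho>2 K2"
proof -
  obtain U1 d1 where U1: "unitary U1" "\<And>i. 0 \<le> d1 i"
    "\<rho>1 = U1 ** diag_mat (\<lambda>i. complex_of_real (d1 i)) ** adj U1"
    using psd_spectral[OF assms(1)] by blast
  obtain U2 d2 where U2: "unitary U2" "\<And>i. 0 \<le> d2 i"
    "\<rho>2 = U2 ** diag_mat (\<lambda>i. complex_of_real (d2 i)) ** adj U2"
    using psd_spectral[OF assms(2)] by blast
  let ?A1 = "adj U1 ** K1 ** U1" and ?A2 = "adj U2 ** K2 ** U2"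
  have le: "parallel_spectral s d1 ?A1 \<le> parallel_spectral s d2 ?A2" if s: "s > 0" for s
  proof -
    obtain X Y where XY: "X + Y = K2" "split_cost \<rho>2 s X Y = complex_of_real (parallel_spectral s d2 ?A2)"
      using split_cost_attains_parallel_spectral[OF U2 s] by blast
    then obtain X1 Y1 where "X1 + Y1 = K1" "Re (split_cost \<rho>1 s X1 Y1) \<le> Re (split_cost \<rho>2 s X Y)"
      using split[OF s] by blast
    then show ?thesis
      using parallel_spectral_le_split_cost[OF U1 s, of X1 Y1] XY(2) by simp
  qed
  \<comment> \<open>Integrate against \<open>s\<^sup>a\<^sup>-\<^sup>1 ds\<close>: the parallel kernels average to the weighted geometric means.\<close>
  have "wyd_spectral a d1 ?A1 \<le> wyd_spectral a d2 ?A2"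
    using le unfolding wyd_spectral_def parallel_spectral_def sum.cartesian_product case_prod_unfold
    by (intro sum_powr_mono_by_parallel_kernel[where w = "\<lambda>x. (cmod (?A1 $ fst x $ snd x))\<^sup>2"
          and p = "\<lambda>x. d1 (fst x)" and q = "\<lambda>x. d1 (snd x)" and w' = "\<lambda>x. (cmod (?A2 $ fst x $ snd x))\<^sup>2"
          and p' = "\<lambda>x. d2 (fst x)" and q' = "\<lambda>x. d2 (snd x)"])
      (auto simp: U1(2) U2(2) a)
  then show ?thesis
    unfolding wyd_trace_spectral[OF U1] wyd_trace_spectral[OF U2] by (simp add: less_eq_complex_def)
qed

section \<open>Tensor products and the partial trace\<close>

lemma sum_UNIV_prod: "(\<Sum>r\<in>(UNIV :: ('a::finite \<times> 'b::finite) set). f r) = (\<Sum>i\<in>UNIV. \<Sum>j\<in>UNIV. f (i, j))"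
  by (simp add: sum.cartesian_product)

lemma kron_nth [simp]: "kron A B $ p $ q = A $ fst p $ fst q * B $ snd p $ snd q"
  by (simp add: kron_def)

lemma kron_mult: "kron A B ** kron C D = kron (A ** C) (B ** (D :: 'b::finite cmat))"
  for A C :: "'a::finite cmat"
  by (simp add: vec_eq_iff matrix_matrix_mult_def sum_UNIV_prod sum_product mult_ac)

lemma adj_kron: "adj (kron A B) = kron (adj A) (adj B)"
  by (simp add: vec_eq_iff)

lemma kron_add_left: "kron (A + B) C = kron A C + kron B C"
  by (simp add: vec_eq_iff algebra_simps)

lemma kron_add_right: "kron C (A + B) = kron C A + kron C B"
  by (simp add: vec_eq_iff algebra_simps)

lemma kron_zero_right [simp]: "kron (A :: 'a::finite cmat) (0 :: 'b::finite cmat) = 0"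
  by (simp add: vec_eq_iff)

lemma kron_sum_list_right: "kron A (\<Sum>x\<leftarrow>xs. f x) = (\<Sum>x\<leftarrow>xs. kron A (f x :: 'b::finite cmat))"
  for A :: "'a::finite cmat"
  by (induction xs) (simp_all add: kron_add_right)

lemma kron_mat_1: "kron (mat 1 :: 'a::finite cmat) (mat 1 :: 'b::finite cmat) = mat 1"
  by (simp add: vec_eq_iff mat_def prod_eq_iff)

lemma kron_diag_mat: "kron (diag_mat p) (diag_mat q) = diag_mat (\<lambda>x. p (fst x) * q (snd x))"
  by (simp add: vec_eq_iff prod_eq_iff)

lemma trace_kron: "trace (kron A B) = trace A * trace B"
  unfolding trace_def by (simp add: sum_UNIV_prod sum_product)

lemma unitary_kron: "unitary A \<Longrightarrow> unitary B \<Longrightarrow> unitary (kron A B)"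
  unfolding unitary_def by (simp add: adj_kron kron_mult kron_mat_1)

lemma mpow_kron:
  assumes "psd A" "psd B"
  shows "mpow (kron A B) c = kron (mpow A c) (mpow B c)"
proof -
  obtain UA dA where UA: "unitary UA" "\<And>i. 0 \<le> dA i"
    "A = UA ** diag_mat (\<lambda>i. complex_of_real (dA i)) ** adj UA"
    using psd_spectral[OF assms(1)] by blast
  obtain UB dB where UB: "unitary UB" "\<And>i. 0 \<le> dB i"
    "B = UB ** diag_mat (\<lambda>i. complex_of_real (dB i)) ** adj UB"
    using psd_spectral[OF assms(2)] by blast
  define V where "V = kron UA UB"
  have "diag_mat (\<lambda>x. complex_of_real (dA (fst x) * dB (snd x)))
      = kron (diag_mat (\<lambda>i. complex_of_real (dA i))) (diag_mat (\<lambda>i. complex_of_real (dB i)))"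
    by (simp add: kron_diag_mat)
  then have "kron A B = V ** diag_mat (\<lambda>x. complex_of_real (dA (fst x) * dB (snd x))) ** adj V"
    unfolding V_def UA(3) UB(3) by (simp only: adj_kron kron_mult)
  then have "mpow (kron A B) c
      = V ** diag_mat (\<lambda>x. complex_of_real ((dA (fst x) * dB (snd x)) powr c)) ** adj V"
    using UA(2) UB(2) unfolding V_def by (intro mpow_spectral unitary_kron UA(1) UB(1)) auto
  also have "diag_mat (\<lambda>x. complex_of_real ((dA (fst x) * dB (snd x)) powr c))
      = kron (diag_mat (\<lambda>i. complex_of_real (dA i powr c))) (diag_mat (\<lambda>i. complex_of_real (dB i powr c)))"
    by (simp add: kron_diag_mat powr_mult)
  also have "V ** \<dots> ** adj V = kron (mpow A c) (mpow B c)"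
    unfolding V_def mpow_spectral[OF UA] mpow_spectral[OF UB] by (simp only: adj_kron kron_mult)
  finally show ?thesis .
qed

lemma trace_mult_kron_mat_1: "trace (\<rho> ** kron Z (mat 1)) = trace (ptrace_B \<rho> ** Z)"
  for \<rho> :: "('a::finite \<times> 'b::finite) cmat"
proof -
  have "trace (\<rho> ** kron Z (mat 1)) = (\<Sum>i\<in>UNIV. \<Sum>j\<in>UNIV. \<Sum>k\<in>UNIV. \<Sum>l\<in>UNIV.
      \<rho> $ (i, j) $ (k, l) * (Z $ k $ i * (mat 1 :: 'b cmat) $ l $ j))"
    unfolding trace_def matrix_matrix_mult_def by (simp add: sum_UNIV_prod)
  also have "\<dots> = (\<Sum>i\<in>UNIV. \<Sum>j\<in>UNIV. \<Sum>k\<in>UNIV. \<rho> $ (i, j) $ (k, j) * Z $ k $ i)"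
    by (simp add: mat_def if_distrib if_distribR cong: if_cong)
  also have "\<dots> = (\<Sum>i\<in>UNIV. \<Sum>k\<in>UNIV. (\<Sum>j\<in>UNIV. \<rho> $ (i, j) $ (k, j)) * Z $ k $ i)"
    by (simp add: sum_distrib_right) (subst sum.swap, simp)
  also have "\<dots> = trace (ptrace_B \<rho> ** Z)"
    unfolding trace_def matrix_matrix_mult_def ptrace_B_def by simp
  finally show ?thesis .
qed

lemma matrix_eq_if_trace_mult_eq:
  fixes A B :: "'n::finite cmat"
  assumes "\<And>Z. trace (A ** Z) = trace (B ** Z)"
  shows "A = B"
proof -
  define E :: "'n \<Rightarrow> 'n \<Rightarrow> 'n cmat" where "E p q = (\<chi> i j. if i = q then if j = p then 1 else 0 else 0)" for p q
  have entry: "trace (M ** E p q) = M $ p $ q" for M p q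
    unfolding E_def trace_def matrix_matrix_mult_def by (simp add: if_distrib[of "times _"] cong: if_cong)
  have "A $ p $ q = B $ p $ q" for p q
    using assms[of "E p q"] unfolding entry .
  then show ?thesis by (simp add: vec_eq_iff)
qed

lemma ptrace_B_eqI:
  assumes "\<And>Z. trace (X ** kron Z (mat 1)) = trace (Y ** Z)"
  shows "ptrace_B X = Y"
  by (rule matrix_eq_if_trace_mult_eq) (simp add: trace_mult_kron_mat_1[symmetric] assms)

lemma psd_ptrace_B:
  fixes \<rho> :: "('a::finite \<times> 'b::finite) cmat"
  assumes "psd \<rho>"
  shows "psd (ptrace_B \<rho>)"
  unfolding psd_iff_cinner
proof (intro conjI allI)
  show "hermitian (ptrace_B \<rho>)"
    using assms unfolding psd_def hermitian_def ptrace_B_def by (simp add: vec_eq_iff)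
  fix x :: "complex^'a"
  \<comment> \<open>The quadratic form of the partial trace is a sum of quadratic forms of \<open>\<rho>\<close> at \<open>x \<otimes> e\<^sub>j\<close>.\<close>
  define xe where "xe j = (\<chi> q. if snd q = j then x $ fst q else 0)" for j :: 'b
  have "(\<Sum>j\<in>UNIV. cinner (xe j) (\<rho> *v xe j))
     = (\<Sum>j\<in>UNIV. \<Sum>i\<in>UNIV. cnj (x $ i) * (\<Sum>k\<in>UNIV. \<rho> $ (i, j) $ (k, j) * x $ k))"
    unfolding cinner_def matrix_vector_mult_def sum_UNIV_prod xe_def
    by (simp add: if_distrib if_distribR cong: if_cong)
  also have "\<dots> = cinner x (ptrace_B \<rho> *v x)"
    unfolding cinner_def matrix_vector_mult_def ptrace_B_def
    by (subst sum.swap) (simp add: sum_distrib_left sum_distrib_right, subst (2) sum.swap, simp)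
  finally have "cinner x (ptrace_B \<rho> *v x) = (\<Sum>j\<in>UNIV. cinner (xe j) (\<rho> *v xe j))" ..
  also have "\<dots> \<ge> 0"
    by (intro sum_nonneg psd_cinner_nonneg assms)
  finally show "0 \<le> cinner x (ptrace_B \<rho> *v x)" .
qed

section \<open>Nonnegativity, product states and local unitaries\<close>

lemma T_alpha_eq: "T_alpha a \<rho> Ks = 1 - (\<Sum>K\<leftarrow>Ks. wyd_trace a \<rho> K)"
  unfolding T_alpha_def apply_ch_def matrix_mult_sum_list_right trace_sum_list wyd_trace_def
  by (simp add: o_def)

lemma DT_eq:
  "DT a \<rho> Ks = (\<Sum>K\<leftarrow>Ks. wyd_trace a (ptrace_B \<rho>) K) - (\<Sum>K\<leftarrow>Ks. wyd_trace a \<rho> (kron K (mat 1)))"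
  unfolding DT_def T_alpha_eq ext_A_def by (simp add: o_def)

lemma split_cost_kron_mat_1:
  "split_cost \<rho> s (kron X (mat 1)) (kron Y (mat 1)) = split_cost (ptrace_B \<rho>) s X Y"
  unfolding split_cost_def by (simp add: adj_kron kron_mult trace_mult_kron_mat_1)

lemma wyd_trace_kron_mat_1_le_ptrace_B:
  fixes \<rho> :: "('a::finite \<times> 'b::finite) cmat"
  assumes "psd \<rho>" "0 < a" "a < 1"
  shows "wyd_trace a \<rho> (kron K (mat 1)) \<le> wyd_trace a (ptrace_B \<rho>) K"
proof (rule wyd_trace_mono_by_split_cost[OF assms(1) psd_ptrace_B[OF assms(1)] assms(2,3)])
  fix s :: real and X Y
  assume "X + Y = K"
  then show "\<exists>X1 Y1. X1 + Y1 = kron K (mat 1) \<and> Re (split_cost \<rho> s X1 Y1) \<le> Re (split_cost (ptrace_B \<rho>) s X Y)"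
    by (intro exI[of _ "kron X (mat 1)"] exI[of _ "kron Y (mat 1)"])
      (simp add: split_cost_kron_mat_1 kron_add_left[symmetric])
qed

lemma DT_nonneg:
  assumes "density \<rho>" "0 < a" "a < 1"
  shows "0 \<le> DT a \<rho> Ks"
proof -
  have "psd \<rho>" using assms(1) unfolding density_def by blast
  then have "(\<Sum>K\<leftarrow>Ks. wyd_trace a \<rho> (kron K (mat 1))) \<le> (\<Sum>K\<leftarrow>Ks. wyd_trace a (ptrace_B \<rho>) K)"
    using assms(2,3) by (intro sum_list_mono wyd_trace_kron_mat_1_le_ptrace_B)
  then show ?thesis unfolding DT_eq by simp
qed

lemma ptrace_B_kron: "trace \<rho>B = 1 \<Longrightarrow> ptrace_B (kron \<rho>A \<rho>B) = \<rho>A"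
  unfolding ptrace_B_def by (simp add: vec_eq_iff sum_distrib_left[symmetric] trace_def)

lemma wyd_trace_kron:
  assumes "psd \<rho>A" "psd \<rho>B"
  shows "wyd_trace a (kron \<rho>A \<rho>B) (kron K (mat 1)) = wyd_trace a \<rho>A K * trace \<rho>B"
proof -
  have "wyd_trace a (kron \<rho>A \<rho>B) (kron K (mat 1))
      = trace (kron (mpow \<rho>A a ** (K ** mpow \<rho>A (1 - a) ** adj K)) (mpow \<rho>B a ** mpow \<rho>B (1 - a)))"
    unfolding wyd_trace_def mpow_kron[OF assms] by (simp add: adj_kron kron_mult)
  then show ?thesis
    unfolding trace_kron mpow_mult_complement[OF assms(2)] wyd_trace_def .
qed

lemma DT_kron_eq_0:
  assumes "density \<rho>A" "density \<rho>B"
  shows "DT a (kron \<rho>A \<rho>B) Ks = 0"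
  using assms unfolding density_def DT_eq by (simp add: ptrace_B_kron wyd_trace_kron)

lemma wyd_trace_unitary_conj:
  assumes V: "unitary V" and "psd \<rho>"
  shows "wyd_trace a (V ** \<rho> ** adj V) K = wyd_trace a \<rho> (adj V ** K ** V)"
proof -
  have "wyd_trace a (V ** \<rho> ** adj V) K
      = trace (V ** (mpow \<rho> a ** (adj V ** K ** V) ** mpow \<rho> (1 - a) ** adj (adj V ** K ** V)) ** adj V)"
    unfolding wyd_trace_def mpow_unitary_conj[OF assms] using V by (simp add: adj_mult matrix_mul_assoc)
  then show ?thesis
    unfolding trace_unitary_conj[OF V] wyd_trace_def by (simp add: matrix_mul_assoc)
qed

lemma ptrace_B_unitary_conj:
  fixes \<rho> :: "('a::finite \<times> 'b::finite) cmat"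
  assumes "unitary UB"
  shows "ptrace_B (kron UA UB ** \<rho> ** adj (kron UA UB)) = UA ** ptrace_B \<rho> ** adj UA"
proof (rule ptrace_B_eqI)
  fix Z
  have "trace (kron UA UB ** \<rho> ** adj (kron UA UB) ** kron Z (mat 1))
      = trace (\<rho> ** kron (adj UA ** Z ** UA) (mat 1))"
    using assms by (simp add: trace_mult_cycle adj_kron kron_mult matrix_mul_assoc) (rule trace_mul_sym)
  also have "\<dots> = trace (UA ** ptrace_B \<rho> ** adj UA ** Z)"
    unfolding trace_mult_kron_mat_1 by (metis trace_mult_cycle matrix_mul_assoc)
  finally show "trace (kron UA UB ** \<rho> ** adj (kron UA UB) ** kron Z (mat 1)) = trace (UA ** ptrace_B \<rho> ** adj UA ** Z)" .
qed

lemma DT_unitary_conj: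
  fixes \<rho> :: "('a::finite \<times> 'b::finite) cmat"
  assumes "density \<rho>" "unitary UA" "unitary UB"
  shows "DT a (kron UA UB ** \<rho> ** adj (kron UA UB)) Ks = DT a \<rho> (map (\<lambda>K. adj UA ** K ** UA) Ks)"
proof -
  have \<rho>: "psd \<rho>" using assms(1) unfolding density_def by blast
  have "adj (kron UA UB) ** kron K (mat 1) ** kron UA UB = kron (adj UA ** K ** UA) (mat 1)" for K
    using assms(3) by (simp add: adj_kron kron_mult)
  then have "wyd_trace a (kron UA UB ** \<rho> ** adj (kron UA UB)) (kron K (mat 1))
      = wyd_trace a \<rho> (kron (adj UA ** K ** UA) (mat 1))" for K
    by (simp add: wyd_trace_unitary_conj[OF unitary_kron[OF assms(2,3)] \<rho>])
  moreover have "wyd_trace a (UA ** ptrace_B \<rho> ** adj UA) = (\<lambda>K. wyd_trace a (ptrace_B \<rho>) (adj UA ** K ** UA))"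
    using wyd_trace_unitary_conj[OF assms(2) psd_ptrace_B[OF \<rho>]] by blast
  ultimately show ?thesis
    unfolding DT_eq ptrace_B_unitary_conj[OF assms(3)] by (simp add: o_def)
qed

definition dual_ch :: "'n::finite cmat list \<Rightarrow> 'n cmat \<Rightarrow> 'n cmat" where
  "dual_ch Ls X = (\<Sum>L\<leftarrow>Ls. adj L ** X ** L)"

section \<open>Local channels on B\<close>

lemma sum_list_map_conv_sum_nth: "(\<Sum>x\<leftarrow>xs. f x) = (\<Sum>i<length xs. f (xs ! i))"
  by (simp add: sum_list_sum_nth atLeast0LessThan)

lemma dual_ch_add: "dual_ch Ls (X + Y) = dual_ch Ls X + dual_ch Ls Y"
  unfolding dual_ch_def
  by (induction Ls) (simp_all add: matrix_add_ldistrib matrix_add_rdistrib algebra_simps)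

lemma adj_dual_ch: "adj (dual_ch Ls X) = dual_ch Ls (adj X)"
  unfolding dual_ch_def adj_sum_list by (simp add: adj_mult matrix_mul_assoc)

lemma trace_apply_ch_mult: "trace (apply_ch Ls \<rho> ** W) = trace (\<rho> ** dual_ch Ls W)"
proof -
  have "trace (apply_ch Ls \<rho> ** W) = (\<Sum>L\<leftarrow>Ls. trace (L ** \<rho> ** adj L ** W))"
    unfolding apply_ch_def matrix_mult_sum_list_left trace_sum_list by (simp add: o_def)
  also have "\<dots> = (\<Sum>L\<leftarrow>Ls. trace (\<rho> ** (adj L ** W ** L)))"
    by (intro arg_cong[where f = sum_list] map_cong refl) (metis matrix_mul_assoc trace_mul_sym)
  also have "\<dots> = trace (\<rho> ** dual_ch Ls W)"
    unfolding dual_ch_def matrix_mult_sum_list_right trace_sum_list by (simp add: o_def)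
  finally show ?thesis .
qed

lemma psd_apply_ch:
  assumes "psd \<rho>"
  shows "psd (apply_ch Ls \<rho>)"
  unfolding psd_iff_cinner
proof (intro conjI allI)
  show "hermitian (apply_ch Ls \<rho>)"
    using assms unfolding psd_def hermitian_def apply_ch_def adj_sum_list
    by (simp add: adj_mult matrix_mul_assoc)
  fix x
  have "cinner x (apply_ch Ls \<rho> *v x) = (\<Sum>i<length Ls. cinner (adj (Ls ! i) *v x) (\<rho> *v (adj (Ls ! i) *v x)))"
    unfolding apply_ch_def sum_list_map_conv_sum_nth sum_matrix_vector_mult cinner_sum_right
    by (intro sum.cong refl) (simp add: matrix_vector_mul_assoc[symmetric] cinner_adj)
  also have "\<dots> \<ge> 0"
    by (intro sum_nonneg psd_cinner_nonneg assms)
  finally show "0 \<le> cinner x (apply_ch Ls \<rho> *v x)" .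
qed

lemma is_channel_ext_B:
  assumes "is_channel Ls"
  shows "is_channel (ext_B Ls :: ('a::finite \<times> 'b::finite) cmat list)"
proof -
  have "(\<Sum>L\<leftarrow>(ext_B Ls :: ('a \<times> 'b) cmat list). adj L ** L) = kron (mat 1 :: 'a cmat) (\<Sum>L\<leftarrow>Ls. adj L ** L)"
    unfolding ext_B_def kron_sum_list_right by (simp add: o_def adj_kron kron_mult)
  then show ?thesis
    using assms unfolding is_channel_def by (simp add: kron_mat_1)
qed

lemma dual_ch_ext_B_kron_mat_1:
  assumes "is_channel Ls"
  shows "dual_ch (ext_B Ls :: ('a::finite \<times> 'b::finite) cmat list) (kron K (mat 1)) = kron K (mat 1)"
proof -
  have "dual_ch (ext_B Ls :: ('a \<times> 'b) cmat list) (kron K (mat 1)) = kron K (\<Sum>L\<leftarrow>Ls. adj L ** L)"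
    unfolding dual_ch_def ext_B_def kron_sum_list_right by (simp add: o_def adj_kron kron_mult)
  then show ?thesis
    using assms unfolding is_channel_def by simp
qed

lemma ptrace_B_apply_ext_B:
  fixes \<rho> :: "('a::finite \<times> 'b::finite) cmat"
  assumes "is_channel Ls"
  shows "ptrace_B (apply_ch (ext_B Ls) \<rho>) = ptrace_B \<rho>"
  by (rule ptrace_B_eqI)
    (unfold trace_apply_ch_mult dual_ch_ext_B_kron_mat_1[OF assms], rule trace_mult_kron_mat_1)

lemma norm_sum_adj_le:
  fixes L :: "'i \<Rightarrow> 'n::finite cmat" and w :: "'i \<Rightarrow> complex^'n"
  assumes "finite I" and id: "(\<Sum>i\<in>I. adj (L i) ** L i) = mat 1"
  shows "(norm (\<Sum>i\<in>I. adj (L i) *v w i))\<^sup>2 \<le> (\<Sum>i\<in>I. (norm (w i))\<^sup>2)"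
proof -
  \<comment> \<open>\<open>z \<mapsto> (L\<^sub>i z)\<^sub>i\<close> is an isometry, so its adjoint \<open>(w\<^sub>i)\<^sub>i \<mapsto> \<Sum> L\<^sub>i\<^sup>* w\<^sub>i\<close> is a contraction.\<close>
  define z where "z = (\<Sum>i\<in>I. adj (L i) *v w i)"
  define S where "S = L2_set (\<lambda>i. norm (w i)) I"
  have "(\<Sum>i\<in>I. (norm (L i *v z))\<^sup>2) = Re (\<Sum>i\<in>I. cinner z (adj (L i) *v (L i *v z)))"
    by (simp add: norm_sq_eq_Re_cinner cinner_adj Re_sum)
  also have "\<dots> = Re (cinner z ((\<Sum>i\<in>I. adj (L i) ** L i) *v z))"
    by (simp add: sum_matrix_vector_mult cinner_sum_right matrix_vector_mul_assoc)
  finally have isometry: "L2_set (\<lambda>i. norm (L i *v z)) I = norm z"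
    unfolding id L2_set_def by (simp add: norm_sq_eq_Re_cinner[symmetric])
  have "(norm z)\<^sup>2 = (\<Sum>i\<in>I. Re (cinner (L i *v z) (w i)))"
    unfolding norm_sq_eq_Re_cinner unfolding z_def
    by (simp add: cinner_sum_right Re_sum cinner_adj[of _ "adj _", simplified] del: adj_adj)
  also have "\<dots> \<le> (\<Sum>i\<in>I. norm (L i *v z) * norm (w i))"
    by (intro sum_mono) (simp add: Re_cinner norm_cauchy_schwarz)
  also have "\<dots> \<le> norm z * S"
    unfolding S_def isometry[symmetric]
    using L2_set_mult_ineq[of "\<lambda>i. norm (L i *v z)" "\<lambda>i. norm (w i)" I] by simp
  finally have "norm z \<le> S"
    using L2_set_nonneg[of "\<lambda>i. norm (w i)" I]
    by (cases "norm z = 0") (auto simp: S_def power2_eq_square)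
  then have "(norm z)\<^sup>2 \<le> S\<^sup>2" by (intro power_mono) auto
  then show ?thesis
    unfolding z_def[symmetric] S_def L2_set_def by (simp add: sum_nonneg)
qed

lemma trace_spectral_mult:
  assumes U: "unitary U" and \<rho>: "\<rho> = U ** diag_mat (\<lambda>i. complex_of_real (d i)) ** adj U"
  shows "trace (\<rho> ** A) = (\<Sum>k\<in>UNIV. complex_of_real (d k) * cinner (column k U) (A *v column k U))"
proof -
  have "trace (\<rho> ** A) = trace (U ** (diag_mat (\<lambda>i. complex_of_real (d i)) ** (adj U ** A ** U)) ** adj U)"
    using U unfolding \<rho> by (simp add: matrix_mul_assoc)
  also have "\<dots> = (\<Sum>k\<in>UNIV. complex_of_real (d k) * (adj U ** A ** U) $ k $ k)"
    unfolding trace_unitary_conj[OF U] by (rule trace_diag_mat_mult)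
  also have "\<dots> = (\<Sum>k\<in>UNIV. complex_of_real (d k) * cinner (column k U) (A *v column k U))"
    unfolding cinner_def matrix_matrix_mult_def matrix_vector_mult_def column_def
    by (simp add: sum_distrib_left sum_distrib_right mult_ac) (subst sum.swap, simp)
  finally show ?thesis .
qed

lemma trace_kadison_schwarz:
  assumes \<rho>: "psd \<rho>" and ch: "is_channel Ls"
  shows "Re (trace (\<rho> ** (adj (dual_ch Ls X) ** dual_ch Ls X))) \<le> Re (trace (\<rho> ** dual_ch Ls (adj X ** X)))"
proof -
  obtain U d where U: "unitary U" "\<And>i. 0 \<le> d i" "\<rho> = U ** diag_mat (\<lambda>i. complex_of_real (d i)) ** adj U"
    using psd_spectral[OF \<rho>] by blast
  let ?L = "\<lambda>i. Ls ! i" and ?I = "{..<length Ls}"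
  have id: "(\<Sum>i\<in>?I. adj (?L i) ** ?L i) = mat 1"
    using ch unfolding is_channel_def sum_list_map_conv_sum_nth .
  have "Re (cinner u ((adj (dual_ch Ls X) ** dual_ch Ls X) *v u))
      \<le> Re (cinner u (dual_ch Ls (adj X ** X) *v u))" for u
  proof -
    have "Re (cinner u ((adj (dual_ch Ls X) ** dual_ch Ls X) *v u)) = (norm (dual_ch Ls X *v u))\<^sup>2"
      by (simp add: matrix_vector_mul_assoc[symmetric] norm_sq_eq_Re_cinner cinner_adj[of _ "adj _", simplified]
          del: adj_adj)
    also have "dual_ch Ls X *v u = (\<Sum>i\<in>?I. adj (?L i) *v (X *v (?L i *v u)))"
      unfolding dual_ch_def sum_list_map_conv_sum_nth
      by (simp add: sum_matrix_vector_mult matrix_vector_mul_assoc matrix_mul_assoc)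
    also have "(norm \<dots>)\<^sup>2 \<le> (\<Sum>i\<in>?I. (norm (X *v (?L i *v u)))\<^sup>2)"
      by (rule norm_sum_adj_le[OF finite_lessThan id])
    also have "\<dots> = Re (cinner u (dual_ch Ls (adj X ** X) *v u))"
      unfolding dual_ch_def sum_list_map_conv_sum_nth
      by (simp add: sum_matrix_vector_mult cinner_sum_right Re_sum norm_sq_eq_Re_cinner
          matrix_vector_mul_assoc[symmetric] cinner_adj[of _ "adj _", simplified] del: adj_adj)
    finally show ?thesis .
  qed
  then show ?thesis
    unfolding trace_spectral_mult[OF U(1,3)] Re_sum
    by (intro sum_mono) (simp add: U(2) mult_left_mono)
qed

lemma wyd_trace_kron_mat_1_le_apply_ext_B:
  fixes \<rho> :: "('a::finite \<times> 'b::finite) cmat"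
  assumes \<rho>: "psd \<rho>" and ch: "is_channel Ls" and a: "0 < a" "a < 1"
  shows "wyd_trace a \<rho> (kron K (mat 1)) \<le> wyd_trace a (apply_ch (ext_B Ls) \<rho>) (kron K (mat 1))"
proof (rule wyd_trace_mono_by_split_cost[OF \<rho> psd_apply_ch[OF \<rho>] a])
  fix s :: real and X Y :: "('a \<times> 'b) cmat"
  assume s: "s > 0" and XY: "X + Y = kron K (mat 1)"
  let ?E = "ext_B Ls :: ('a \<times> 'b) cmat list"
  \<comment> \<open>Pull the decomposition back through the dual channel, which fixes \<open>K \<otimes> I\<close>; Kadison--Schwarz bounds both costs.\<close>
  have sum: "dual_ch ?E X + dual_ch ?E Y = kron K (mat 1)"
    unfolding dual_ch_add[symmetric] XY by (rule dual_ch_ext_B_kron_mat_1[OF ch])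
  have E: "is_channel ?E" by (rule is_channel_ext_B[OF ch])
  have "Re (trace (\<rho> ** (adj (dual_ch ?E X) ** dual_ch ?E X))) \<le> Re (trace (apply_ch ?E \<rho> ** (adj X ** X)))"
    unfolding trace_apply_ch_mult by (rule trace_kadison_schwarz[OF \<rho> E])
  moreover have "Re (trace (\<rho> ** (dual_ch ?E Y ** adj (dual_ch ?E Y)))) \<le> Re (trace (apply_ch ?E \<rho> ** (Y ** adj Y)))"
    using trace_kadison_schwarz[OF \<rho> E, of "adj Y"] unfolding trace_apply_ch_mult by (simp add: adj_dual_ch)
  ultimately have "Re (split_cost \<rho> s (dual_ch ?E X) (dual_ch ?E Y)) \<le> Re (split_cost (apply_ch ?E \<rho>) s X Y)"
    unfolding split_cost_def using s by (simp add: add_mono divide_right_mono)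
  with sum show "\<exists>X1 Y1. X1 + Y1 = kron K (mat 1)
      \<and> Re (split_cost \<rho> s X1 Y1) \<le> Re (split_cost (apply_ch ?E \<rho>) s X Y)"
    by blast
qed

lemma DT_apply_ext_B_le:
  fixes \<rho> :: "('a::finite \<times> 'b::finite) cmat"
  assumes "density \<rho>" "is_channel Ls" "0 < a" "a < 1"
  shows "DT a (apply_ch (ext_B Ls) \<rho>) Ks \<le> DT a \<rho> Ks"
proof -
  have "psd \<rho>" using assms(1) unfolding density_def by blast
  then have "(\<Sum>K\<leftarrow>Ks. wyd_trace a \<rho> (kron K (mat 1)))
      \<le> (\<Sum>K\<leftarrow>Ks. wyd_trace a (apply_ch (ext_B Ls) \<rho>) (kron K (mat 1)))"
    using assms(2-4) by (intro sum_list_mono wyd_trace_kron_mat_1_le_apply_ext_B)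
  then show ?thesis
    unfolding DT_eq ptrace_B_apply_ext_B[OF assms(2)] by simp
qed

theorem theorem2:
  fixes a :: real
    and \<rho> :: "('a::finite \<times> 'b::finite) cmat"
    and Ks :: "'a cmat list"
  assumes "0 < a" "a < 1"
    and "density \<rho>"
    and "is_channel Ks"
  shows "0 \<le> DT a \<rho> Ks
    \<and> (\<forall>\<rho>A \<rho>B. density \<rho>A \<and> density \<rho>B \<longrightarrow>
           DT a (kron \<rho>A \<rho>B :: ('a \<times> 'b) cmat) Ks = 0)
    \<and> (\<forall>UA UB. unitary (UA :: 'a cmat) \<and> unitary (UB :: 'b cmat) \<longrightarrow>
           DT a (kron UA UB ** \<rho> ** adj (kron UA UB)) Ks
             = DT a \<rho> (map (\<lambda>K. adj UA ** K ** UA) Ks))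
    \<and> (\<forall>Ls :: 'b cmat list. is_channel Ls \<longrightarrow>
           DT a (apply_ch (ext_B Ls :: ('a \<times> 'b) cmat list) \<rho>) Ks \<le> DT a \<rho> Ks)"
proof (intro conjI allI impI; (elim conjE)?)
  show "0 \<le> DT a \<rho> Ks"
    by (rule DT_nonneg[OF assms(3,1,2)])
  show "DT a (kron \<rho>A \<rho>B) Ks = 0" if "density \<rho>A" "density \<rho>B" for \<rho>A :: "'a cmat" and \<rho>B :: "'b cmat"
    by (rule DT_kron_eq_0[OF that])
  show "DT a (kron UA UB ** \<rho> ** adj (kron UA UB)) Ks = DT a \<rho> (map (\<lambda>K. adj UA ** K ** UA) Ks)"
    if "unitary UA" "unitary UB" for UA :: "'a cmat" and UB :: "'b cmat"
    by (rule DT_unitary_conj[OF assms(3) that])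
  show "DT a (apply_ch (ext_B Ls) \<rho>) Ks \<le> DT a \<rho> Ks" if "is_channel Ls" for Ls :: "'b cmat list"
    by (rule DT_apply_ext_B_le[OF assms(3) that assms(1,2)])
qed

end
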